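(* Let $\Sigma$ be a finite alphabet and let $C \subseteq \Sigma^n$ be a code with $|C|\ge 2$ and minimum Levenshtein distance $d$. Let $t<n$ be a non-negative integer, let $N$ be an integer with $n-t\le N\le n+t$, let $v\in\Sigma^N$, and let $\ell = |B_\mathsf{L}(v,t,t)\cap C|$. If $$t < n - \sqrt{n(n-d/2)},$$ then $$\ell \leq \frac{(d/2)(n+t)}{(d/2-2t)n+t^2} \leq nd.$$
   Context: For words $x,y$ over $\Sigma$ (possibly of different lengths), the Levenshtein distance $d_\mathsf{L}(x,y)$ is the minimum number of single-symbol insertions and deletions needed to transform $x$ into $y$. The minimum Levenshtein distance of a code $C$ is $\min\{d_\mathsf{L}(c_1,c_2): c_1\neq c_2 \in C\}$. For a word $v$ and non-negative integers $a,b$, $B_\mathsf{L}(v,a,b)$ denotes the set of all words obtainable from $v$ by at most $a$ insertions and at most $b$ deletions. *)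

theory Defs
  imports Complex_Main
begin

definition ins1 :: "'a list \<Rightarrow> 'a list \<Rightarrow> bool" where
  "ins1 x y \<longleftrightarrow> (\<exists>u w a. x = u @ w \<and> y = u @ [a] @ w)"

definition indel1 :: "'a list \<Rightarrow> 'a list \<Rightarrow> bool" where
  "indel1 x y \<longleftrightarrow> ins1 x y \<or> ins1 y x"

definition lev_dist :: "'a list \<Rightarrow> 'a list \<Rightarrow> nat" where
  "lev_dist x y = (LEAST k. (indel1 ^^ k) x y)"

definition min_lev_dist :: "'a list set \<Rightarrow> nat" where
  "min_lev_dist C = Min {lev_dist c1 c2 | c1 c2. c1 \<in> C \<and> c2 \<in> C \<and> c1 \<noteq> c2}"

inductive obt :: "'a list \<Rightarrow> nat \<Rightarrow> nat \<Rightarrow> 'a list \<Rightarrow> bool" where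
  refl: "obt x 0 0 x"
| ins: "obt x i j y \<Longrightarrow> ins1 y z \<Longrightarrow> obt x (Suc i) j z"
| del: "obt x i j y \<Longrightarrow> ins1 z y \<Longrightarrow> obt x i (Suc j) z"

definition lev_ball :: "'a list \<Rightarrow> nat \<Rightarrow> nat \<Rightarrow> 'a list set" where
  "lev_ball v a b = {y. \<exists>i j. i \<le> a \<and> j \<le> b \<and> obt v i j y}"

end

(*
  Every word of the ball B_L(v,t,t) shares with v a common subsequence of length at least
  max n N - t, recorded as a set of positions in v. For two distinct codewords in the ball, the
  intersection of their position sets indexes a common subsequence of both, so it has at most
  n - d/2 elements. A Johnson-type second-moment count (Cauchy-Schwarz applied to how many of
  these sets contain each position of v) bounds the number of such sets, and elementary algebra
  turns the count into the stated bound. That bound is at most n d because d is even, which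
  makes its denominator a positive integer.
*)

theory Submission
  imports Defs "HOL-Library.Sublist" "HOL-Analysis.Convex"
begin

section \<open>Insertion-deletion paths\<close>

lemma ins1_length: "ins1 x y \<Longrightarrow> length y = Suc (length x)"
  unfolding ins1_def by auto

lemma ins1_subseq: "ins1 x y \<Longrightarrow> subseq x y"
  unfolding ins1_def by (auto intro: list_emb_append_mono)

lemma symp_indel1: "symp indel1"
  unfolding symp_def indel1_def by blast

lemma relpowp_symp: "symp R \<Longrightarrow> (R ^^ k) x y \<Longrightarrow> (R ^^ k) y x"
proof (induction k arbitrary: y)
  case (Suc k)
  from \<open>(R ^^ Suc k) x y\<close> obtain z where "(R ^^ k) x z" "R z y"
    by (rule relpowp_Suc_E)
  with Suc show ?case
    by (metis relpowp_Suc_I2 sympD)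
qed simp

lemma relpowp_indel1_parity: "(indel1 ^^ k) x y \<Longrightarrow> even (length x + length y + k)"
proof (induction k arbitrary: x)
  case (Suc k)
  from \<open>(indel1 ^^ Suc k) x y\<close> obtain z where "indel1 x z" "(indel1 ^^ k) z y"
    by (rule relpowp_Suc_E2)
  moreover from \<open>indel1 x z\<close> have "length z = Suc (length x) \<or> length x = Suc (length z)"
    unfolding indel1_def using ins1_length by blast
  ultimately show ?case
    using Suc.IH by fastforce
qed simp

lemma relpowp_indel1_Cons: "(indel1 ^^ k) xs ys \<Longrightarrow> (indel1 ^^ k) (a # xs) (a # ys)"
proof (induction k arbitrary: xs)
  case (Suc k)
  from \<open>(indel1 ^^ Suc k) xs ys\<close> obtain zs where "indel1 xs zs" "(indel1 ^^ k) zs ys"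
    by (rule relpowp_Suc_E2)
  moreover from \<open>indel1 xs zs\<close> have "indel1 (a # xs) (a # zs)"
    unfolding indel1_def ins1_def by (metis append_Cons)
  ultimately show ?case
    using Suc.IH relpowp_Suc_I2 by metis
qed simp

lemma indel1_Cons_self: "indel1 (a # xs) xs"
  unfolding indel1_def ins1_def by (metis append.left_neutral append_Cons)

lemma relpowp_indel1_subseq: "subseq z x \<Longrightarrow> (indel1 ^^ (length x - length z)) x z"
proof (induction rule: list_emb.induct)
  case (list_emb_Nil ys)
  show ?case
  proof (induction ys)
    case (Cons a ys)
    show ?case
      using relpowp_Suc_I2[OF indel1_Cons_self Cons.IH] by simp
  qed simp
next
  case (list_emb_Cons xs ys y)
  then have "length (y # ys) - length xs = Suc (length ys - length xs)"
    using list_emb_length by fastforce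
  with list_emb_Cons.IH show ?case
    by (metis indel1_Cons_self relpowp_Suc_I2)
next
  case (list_emb_Cons2 x y xs ys)
  then show ?case
    using relpowp_indel1_Cons by fastforce
qed

lemma relpowp_indel1_common_subseq:
  assumes "subseq z x" "subseq z y"
  shows "(indel1 ^^ ((length x - length z) + (length y - length z))) x y"
  using relpowp_trans[OF relpowp_indel1_subseq[OF assms(1)]
      relpowp_symp[OF symp_indel1 relpowp_indel1_subseq[OF assms(2)]]] .

lemma lev_dist_le_relpowp: "(indel1 ^^ k) x y \<Longrightarrow> lev_dist x y \<le> k"
  unfolding lev_dist_def by (rule Least_le)

lemma lev_dist_le_common_subseq:
  "subseq z x \<Longrightarrow> subseq z y \<Longrightarrow> lev_dist x y \<le> (length x - length z) + (length y - length z)"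
  using relpowp_indel1_common_subseq lev_dist_le_relpowp by blast

lemma lev_dist_le_length_add: "lev_dist x y \<le> length x + length y"
  using lev_dist_le_common_subseq[of "[]" x y] by simp

lemma relpowp_indel1_lev_dist: "(indel1 ^^ lev_dist x y) x y"
  unfolding lev_dist_def
  using relpowp_indel1_common_subseq[of "[]" x y] by (rule LeastI) simp_all

lemma even_lev_dist: "length x = length y \<Longrightarrow> even (lev_dist x y)"
  using relpowp_indel1_parity[OF relpowp_indel1_lev_dist[of x y]] by simp

section \<open>Common subsequences and position sets\<close>

lemma subseq_delete1:
  assumes "subseq x (u @ a # w)"
  shows "\<exists>x'. subseq x' x \<and> subseq x' (u @ w) \<and> length x \<le> Suc (length x')"
proof -
  from assms obtain x1 x2 where x: "x = x1 @ x2" "subseq x1 u" "subseq x2 (a # w)"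
    by (auto elim: subseq_appendE)
  have "subseq (drop 1 x2) w"
    using x(3) by (cases x2) (auto split: if_splits intro: subseq_Cons')
  moreover have "subseq (drop 1 x2) x2"
    by (cases x2) auto
  ultimately show ?thesis
    using x by (intro exI[of _ "x1 @ drop 1 x2"]) (auto intro: list_emb_append_mono)
qed

lemma obt_common_subseq:
  "obt v i j y \<Longrightarrow>
    \<exists>x. subseq x v \<and> subseq x y \<and> length v \<le> length x + j \<and> length y + j = length v + i"
proof (induction rule: obt.induct)
  case (ins v i j y z)
  then show ?case
    using ins1_subseq ins1_length subseq_order.trans by fastforce
next
  case (del v i j y z)
  then obtain x where x: "subseq x v" "subseq x y" "length v \<le> length x + j"
      "length y + j = length v + i"
    by blast
  from \<open>ins1 z y\<close> obtain u w a where uw: "z = u @ w" "y = u @ a # w"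
    unfolding ins1_def by auto
  with x(2) obtain x' where "subseq x' x" "subseq x' z" "length x \<le> Suc (length x')"
    using subseq_delete1 by metis
  with x uw show ?case
    by (intro exI[of _ x']) (auto intro: subseq_order.trans)
qed auto

lemma nths_inter_lessThan_length: "nths xs (I \<inter> {..<length xs}) = nths xs I"
  unfolding nths_def by (auto intro!: arg_cong[where f="map fst"] filter_cong dest: set_zip_rightD)

lemma subseq_nths_positions:
  assumes "subseq x v"
  obtains S where "S \<subseteq> {..<length v}" "x = nths v S" "card S = length x"
proof -
  from assms obtain S where S: "x = nths v S"
    by (auto simp: subseq_conv_nths)
  show thesis
  proof
    show "x = nths v (S \<inter> {..<length v})"
      by (simp add: S nths_inter_lessThan_length)
    then show "card (S \<inter> {..<length v}) = length x"
      by (simp add: length_nths Int_def conj_commute cong: conj_cong)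
  qed simp
qed

lemma nths_subseq_nths: "A \<subseteq> B \<Longrightarrow> subseq (nths xs A) (nths xs B)"
proof (induction xs arbitrary: A B)
  case (Cons x xs)
  then have "subseq (nths xs {j. Suc j \<in> A}) (nths xs {j. Suc j \<in> B})"
    by (metis (mono_tags, lifting) Collect_mono subsetD)
  with Cons.prems show ?case
    by (auto simp: nths_Cons)
qed simp

lemma lev_ball_common_positions:
  assumes "c \<in> lev_ball v t t"
  obtains S where "S \<subseteq> {..<length v}" "subseq (nths v S) c"
    "length c \<le> card S + t" "length v \<le> card S + t"
proof -
  from assms obtain i j where ij: "i \<le> t" "j \<le> t" "obt v i j c"
    unfolding lev_ball_def by blast
  then obtain x where x: "subseq x v" "subseq x c" "length v \<le> length x + j"
      "length c + j = length v + i"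
    using obt_common_subseq by blast
  from \<open>subseq x v\<close> obtain S where "S \<subseteq> {..<length v}" "x = nths v S" "card S = length x"
    by (rule subseq_nths_positions)
  with that x ij show thesis
    by simp
qed

lemma card_common_positions_le:
  assumes "A \<subseteq> {..<length v}" "subseq (nths v A) a" "subseq (nths v B) b"
  shows "2 * card (A \<inter> B) + lev_dist a b \<le> length a + length b"
proof -
  define z where "z = nths v (A \<inter> B)"
  have "subseq z a" "subseq z b"
    using assms nths_subseq_nths[of "A \<inter> B"] subseq_order.trans unfolding z_def by blast+
  moreover have "length z = card (A \<inter> B)"
    using assms(1) unfolding z_def length_nths by (intro arg_cong[where f=card]) auto
  moreover have "length z \<le> length a" "length z \<le> length b"
    using calculation(1,2) by (simp_all add: list_emb_length)
  ultimately show ?thesis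
    using lev_dist_le_common_subseq[of z a b] by linarith
qed

section \<open>Minimum distance of a code\<close>

lemma finite_lev_dists:
  assumes "finite C"
  shows "finite {lev_dist c1 c2 | c1 c2. c1 \<in> C \<and> c2 \<in> C \<and> c1 \<noteq> c2}"
proof (rule finite_subset)
  show "finite ((\<lambda>(c1, c2). lev_dist c1 c2) ` (C \<times> C))"
    using assms by simp
qed auto

lemma min_lev_dist_le:
  "finite C \<Longrightarrow> a \<in> C \<Longrightarrow> b \<in> C \<Longrightarrow> a \<noteq> b \<Longrightarrow> min_lev_dist C \<le> lev_dist a b"
  unfolding min_lev_dist_def by (rule Min_le[OF finite_lev_dists]) auto

lemma min_lev_dist_attained:
  assumes "2 \<le> card C"
  obtains a b where "a \<in> C" "b \<in> C" "min_lev_dist C = lev_dist a b"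
proof -
  have "finite C"
    using assms by (metis card.infinite not_numeral_le_zero)
  moreover have "\<not> card C \<le> Suc 0"
    using assms by simp
  ultimately obtain a b where "a \<in> C" "b \<in> C" "a \<noteq> b"
    using card_le_Suc0_iff_eq by blast
  with \<open>finite C\<close> have "min_lev_dist C \<in> {lev_dist c1 c2 | c1 c2. c1 \<in> C \<and> c2 \<in> C \<and> c1 \<noteq> c2}"
    unfolding min_lev_dist_def by (intro Min_in finite_lev_dists) auto
  with that show thesis
    by blast
qed

lemma even_min_lev_dist:
  "\<forall>c\<in>C. length c = n \<Longrightarrow> 2 \<le> card C \<Longrightarrow> even (min_lev_dist C)"
  by (metis even_lev_dist min_lev_dist_attained)

lemma min_lev_dist_le_double_length:
  "\<forall>c\<in>C. length c = n \<Longrightarrow> 2 \<le> card C \<Longrightarrow> min_lev_dist C \<le> 2 * n"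
  by (metis lev_dist_le_length_add min_lev_dist_attained mult_2)

section \<open>A Johnson-type counting bound\<close>

lemma sum_of_bool_mem_eq_card:
  "finite U \<Longrightarrow> A \<subseteq> U \<Longrightarrow> (\<Sum>x\<in>U. of_bool (x \<in> A)) = (of_nat (card A) :: 'a::semiring_1)"
  using sum_of_bool_eq[of U "\<lambda>x. x \<in> A"] by (simp add: Int_absorb1)

lemma sum_degrees_eq:
  assumes "finite U" "\<And>c. c \<in> L \<Longrightarrow> S c \<subseteq> U"
  shows "(\<Sum>x\<in>U. \<Sum>c\<in>L. of_bool (x \<in> S c)) = (\<Sum>c\<in>L. (of_nat (card (S c)) :: 'a::semiring_1))"
  using assms by (subst sum.swap) (intro sum.cong[OF HOL.refl] sum_of_bool_mem_eq_card)

lemma sum_degrees_squared_eq: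
  assumes "finite U" "\<And>c. c \<in> L \<Longrightarrow> S c \<subseteq> U"
  shows "(\<Sum>x\<in>U. (\<Sum>c\<in>L. of_bool (x \<in> S c))\<^sup>2)
    = (\<Sum>a\<in>L. \<Sum>b\<in>L. (of_nat (card (S a \<inter> S b)) :: 'a::comm_semiring_1))"
proof -
  have "(\<Sum>x\<in>U. (\<Sum>c\<in>L. of_bool (x \<in> S c))\<^sup>2)
      = (\<Sum>x\<in>U. \<Sum>a\<in>L. \<Sum>b\<in>L. (of_bool (x \<in> S a \<inter> S b) :: 'a))"
    by (simp add: power2_eq_square sum_product of_bool_conj)
  also have "\<dots> = (\<Sum>a\<in>L. \<Sum>b\<in>L. \<Sum>x\<in>U. of_bool (x \<in> S a \<inter> S b))"
    by (simp add: sum.swap[of _ U])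
  also have "\<dots> = (\<Sum>a\<in>L. \<Sum>b\<in>L. of_nat (card (S a \<inter> S b)))"
    using assms by (intro sum.cong HOL.refl sum_of_bool_mem_eq_card) auto
  finally show ?thesis .
qed

lemma sum_card_inter_le:
  fixes \<mu> :: real
  assumes "finite L" "\<And>a b. a \<in> L \<Longrightarrow> b \<in> L \<Longrightarrow> a \<noteq> b \<Longrightarrow> card (S a \<inter> S b) \<le> \<mu>"
  shows "(\<Sum>a\<in>L. \<Sum>b\<in>L. real (card (S a \<inter> S b)))
    \<le> (\<Sum>a\<in>L. real (card (S a))) + real (card L) * (real (card L) - 1) * \<mu>"
proof -
  have "(\<Sum>b\<in>L. real (card (S a \<inter> S b))) \<le> card (S a) + (real (card L) - 1) * \<mu>" if "a \<in> L" for a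
  proof -
    have "(\<Sum>b\<in>L - {a}. real (card (S a \<inter> S b))) \<le> card (L - {a}) * \<mu>"
      using assms(2) that by (intro sum_bounded_above) auto
    moreover have "real (card (L - {a})) = real (card L) - 1"
      by (simp flip: card_Suc_Diff1[OF assms(1) that])
    moreover have "(\<Sum>b\<in>L. real (card (S a \<inter> S b)))
        = card (S a) + (\<Sum>b\<in>L - {a}. real (card (S a \<inter> S b)))"
      using sum.remove[OF assms(1) that, of "\<lambda>b. real (card (S a \<inter> S b))"] by simp
    ultimately show ?thesis
      by (metis add_left_mono)
  qed
  then have "(\<Sum>a\<in>L. \<Sum>b\<in>L. real (card (S a \<inter> S b))) \<le> (\<Sum>a\<in>L. card (S a) + (real (card L) - 1) * \<mu>)"
    by (rule sum_mono)
  then show ?thesis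
    by (simp add: sum.distrib)
qed

text \<open>The degrees of the points sum to
  \<open>s \<ge> card L * m\<close> and their squares to at most \<open>s + card L * (card L - 1) * \<mu>\<close>, so
  Cauchy--Schwarz gives \<open>s\<^sup>2 - N * s \<le> N * card L * (card L - 1) * \<mu>\<close>; the left-hand side
  is increasing in \<open>s\<close> for \<open>s \<ge> N / 2\<close>, which is where the last hypothesis enters.\<close>

lemma card_family_le_by_intersections:
  fixes S :: "'b \<Rightarrow> 'c set" and m \<mu> :: real
  assumes "finite L" "finite U" "\<And>c. c \<in> L \<Longrightarrow> S c \<subseteq> U"
    and "\<And>c. c \<in> L \<Longrightarrow> m \<le> card (S c)"
    and "\<And>a b. a \<in> L \<Longrightarrow> b \<in> L \<Longrightarrow> a \<noteq> b \<Longrightarrow> card (S a \<inter> S b) \<le> \<mu>"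
    and "card U \<le> 2 * card L * m"
  shows "card L * (m\<^sup>2 - card U * \<mu>) \<le> card U * (m - \<mu>)"
proof -
  define l N s where "l = real (card L)" and "N = real (card U)"
    and "s = (\<Sum>c\<in>L. real (card (S c)))"
  define deg where "deg x = (\<Sum>c\<in>L. of_bool (x \<in> S c) :: real)" for x
  have "(\<Sum>x\<in>U. deg x) = s"
    unfolding deg_def s_def using assms(2,3) by (rule sum_degrees_eq)
  moreover have "(\<Sum>x\<in>U. (deg x)\<^sup>2) = (\<Sum>a\<in>L. \<Sum>b\<in>L. real (card (S a \<inter> S b)))"
    unfolding deg_def using assms(2,3) by (rule sum_degrees_squared_eq)
  ultimately have "s\<^sup>2 \<le> (\<Sum>a\<in>L. \<Sum>b\<in>L. real (card (S a \<inter> S b))) * N"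
    using sum_squared_le_sum_of_squares[of deg U] by (simp add: N_def)
  also have "\<dots> \<le> (s + l * (l - 1) * \<mu>) * N"
    using sum_card_inter_le[OF assms(1,5)] by (intro mult_right_mono) (simp_all add: s_def l_def N_def)
  finally have CS: "s\<^sup>2 - N * s \<le> N * l * (l - 1) * \<mu>"
    by (simp add: algebra_simps)
  have "l * m \<le> s"
    using sum_bounded_below[of L m "\<lambda>c. real (card (S c))"] assms(4) by (simp add: s_def l_def)
  moreover have "N \<le> 2 * l * m"
    using assms(6) by (simp add: N_def l_def)
  ultimately have "0 \<le> (s - l * m) * (s + l * m - N)"
    by (intro mult_nonneg_nonneg) auto
  then have "(l * m)\<^sup>2 - N * (l * m) \<le> s\<^sup>2 - N * s"
    by (simp add: power2_eq_square algebra_simps)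
  with CS have "l * (l * m\<^sup>2 - N * m) \<le> l * (N * (l - 1) * \<mu>)"
    by (simp add: power2_eq_square algebra_simps)
  moreover have "l * (m\<^sup>2 - N * \<mu>) - N * (m - \<mu>) = (l * m\<^sup>2 - N * m) - N * (l - 1) * \<mu>"
    by (simp add: algebra_simps)
  moreover have "l = 0 \<Longrightarrow> N = 0"
    using \<open>N \<le> 2 * l * m\<close> by (simp add: N_def)
  ultimately have "l * (m\<^sup>2 - N * \<mu>) \<le> N * (m - \<mu>)"
    using mult_left_le_imp_le[of l "l * m\<^sup>2 - N * m" "N * (l - 1) * \<mu>"]
    by (cases "l = 0") (simp_all add: l_def)
  then show ?thesis
    by (simp add: l_def N_def)
qed

section \<open>The list-size bound\<close>

context
  fixes n t N h :: real
  assumes t_nonneg: "0 \<le> t" and t_less: "t < n" and h_le: "h \<le> n"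
    and D_pos: "0 < h * n - 2 * t * n + t\<^sup>2"
begin

private lemma t_less_h: "t < h"
proof -
  have "t * t \<le> t * n"
    using t_nonneg t_less by (intro mult_left_mono) auto
  then have "t * n \<le> 2 * t * n - t\<^sup>2"
    by (simp add: power2_eq_square mult.commute)
  with D_pos have "t * n < h * n"
    by linarith
  with t_nonneg t_less show ?thesis
    by (simp add: mult_less_cancel_right)
qed

private lemma n_mult_D_le: "n * (h * n - 2 * t * n + t\<^sup>2) \<le> 2 * (n - t) * (n + t) * h"
proof -
  have "0 \<le> h * (n\<^sup>2 - 2 * t\<^sup>2) + t * n * (2 * n - t)"
  proof (cases "2 * t\<^sup>2 \<le> n\<^sup>2")
    case True
    with t_less_h t_nonneg t_less show ?thesis
      by simp
  next
    case False
    then have "n * (n\<^sup>2 - 2 * t\<^sup>2) \<le> h * (n\<^sup>2 - 2 * t\<^sup>2)"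
      using h_le by (intro mult_right_mono_neg) auto
    moreover have "n * (n\<^sup>2 - 2 * t\<^sup>2) + t * n * (2 * n - t) = n * (n + 3 * t) * (n - t)"
      by (simp add: power2_eq_square algebra_simps)
    ultimately show ?thesis
      using t_nonneg t_less by (smt (verit) mult_nonneg_nonneg)
  qed
  then show ?thesis
    by (simp add: power2_eq_square algebra_simps)
qed

lemma johnson_arith_small_family:
  assumes "2 * l * (max n N - t) < N"
  shows "l * (h * n - 2 * t * n + t\<^sup>2) \<le> h * (n + t)"
proof -
  define D where "D = h * n - 2 * t * n + t\<^sup>2"
  have "2 * l * (n - t) \<le> n"
  proof (cases "N \<le> n")
    case True
    with assms show ?thesis
      by simp
  next
    case False
    then have "2 * l * (n - t) * (N - t) \<le> N * (n - t)"
      using assms t_less by (simp add: mult.commute mult_right_mono)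
    also have "\<dots> \<le> n * (N - t)"
      using False t_nonneg by (simp add: algebra_simps mult_right_mono)
    finally show ?thesis
      using False t_less by simp
  qed
  then have "2 * l * (n - t) * D \<le> n * D"
    using D_pos by (intro mult_right_mono) (auto simp: D_def)
  then have "l * D * (2 * (n - t)) \<le> n * D"
    by (simp add: mult_ac)
  also have "\<dots> \<le> h * (n + t) * (2 * (n - t))"
    using n_mult_D_le by (simp add: D_def algebra_simps)
  finally show ?thesis
    using t_less by (simp add: D_def)
qed

lemma johnson_arith_large_family_short_word:
  assumes "n - t \<le> N" "N \<le> n" "0 \<le> l"
    and "l * ((n - t)\<^sup>2 - N * (n - h)) \<le> N * (h - t)"
  shows "l * (h * n - 2 * t * n + t\<^sup>2) \<le> h * (n + t)"
proof -
  have "h * n - 2 * t * n + t\<^sup>2 \<le> (n - t)\<^sup>2 - N * (n - h)"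
    using assms(2) h_le mult_right_mono[of N n "n - h"] by (simp add: power2_eq_square algebra_simps)
  then have "l * (h * n - 2 * t * n + t\<^sup>2) \<le> l * ((n - t)\<^sup>2 - N * (n - h))"
    using assms(3) by (rule mult_left_mono)
  also have "\<dots> \<le> N * (h - t)"
    by (rule assms(4))
  also have "\<dots> \<le> n * h"
    using assms(1,2) t_less t_less_h t_nonneg by (smt (verit) mult_mono)
  also have "\<dots> \<le> h * (n + t)"
    using t_less_h t_nonneg by (simp add: algebra_simps)
  finally show ?thesis .
qed

text \<open>Writing \<open>N = n + e\<close>, the factor \<open>(N - t)\<^sup>2 - N * (n - h)\<close> exceeds
  \<open>h * n - 2 * t * n + t\<^sup>2\<close> by \<open>e * (n - 2 * t + e + h)\<close>, and the claim reduces to a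
  polynomial identity whose right-hand side is visibly nonnegative.\<close>

lemma johnson_arith_large_family_long_word:
  assumes "n < N" "N \<le> n + t" "0 \<le> l"
    and "l * ((N - t)\<^sup>2 - N * (n - h)) \<le> N * (N - t - (n - h))"
  shows "l * (h * n - 2 * t * n + t\<^sup>2) \<le> h * (n + t)"
proof -
  define D e where "D = h * n - 2 * t * n + t\<^sup>2" and "e = N - n"
  define D' where "D' = D + e * (n - 2 * t + e + h)"
  have e: "0 \<le> e" "e \<le> t"
    using assms(1,2) by (auto simp: e_def)
  have "0 < n - 2 * t + e + h"
    using t_less_h t_less e by simp
  with e D_pos have "0 < D'"
    unfolding D'_def D_def by (smt (verit) mult_nonneg_nonneg)
  have "(N - t)\<^sup>2 - N * (n - h) = D'" "N - t - (n - h) = e + h - t"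
    by (simp_all add: D'_def D_def e_def power2_eq_square algebra_simps)
  with assms(4) have "l * D' \<le> N * (e + h - t)"
    by simp
  then have "l * D * D' \<le> N * (e + h - t) * D"
    using D_pos by (simp add: D_def mult_right_mono mult_ac)
  also have "\<dots> \<le> h * (n + t) * D'"
  proof -
    have "h * (n + t) * D' - N * (e + h - t) * D
        = D * ((t - e) * (h + n + e)) + h * (n + t) * (e * (n - 2 * t + e + h))"
      by (simp add: D'_def e_def algebra_simps)
    moreover have "0 \<le> D * ((t - e) * (h + n + e))"
      using D_pos e t_less_h t_less by (simp add: D_def)
    moreover have "0 \<le> h * (n + t) * (e * (n - 2 * t + e + h))"
      using \<open>0 < n - 2 * t + e + h\<close> e t_less_h t_less by simp
    ultimately show ?thesis
      by linarith
  qed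
  finally show ?thesis
    using \<open>0 < D'\<close> unfolding D_def by simp
qed

lemma johnson_arith_large_family:
  assumes "n - t \<le> N" "N \<le> n + t" "0 \<le> l"
    and "l * ((max n N - t)\<^sup>2 - N * (n - h)) \<le> N * (max n N - t - (n - h))"
  shows "l * (h * n - 2 * t * n + t\<^sup>2) \<le> h * (n + t)"
proof (cases "N \<le> n")
  case True
  with assms show ?thesis
    by (intro johnson_arith_large_family_short_word) simp_all
next
  case False
  with assms show ?thesis
    by (intro johnson_arith_large_family_long_word) simp_all
qed

end

lemma lev_ball_code_position_family:
  fixes C :: "'a list set" and v :: "'a list" and h :: real
  assumes "\<forall>c\<in>C. length c = n"
    and "\<And>a b. a \<in> C \<Longrightarrow> b \<in> C \<Longrightarrow> a \<noteq> b \<Longrightarrow> 2 * h \<le> real (lev_dist a b)"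
  obtains P where "\<And>c. c \<in> lev_ball v t t \<inter> C \<Longrightarrow> P c \<subseteq> {..<length v}"
    and "\<And>c. c \<in> lev_ball v t t \<inter> C \<Longrightarrow> real (max n (length v)) - real t \<le> real (card (P c))"
    and "\<And>a b. a \<in> lev_ball v t t \<inter> C \<Longrightarrow> b \<in> lev_ball v t t \<inter> C \<Longrightarrow> a \<noteq> b \<Longrightarrow>
      real (card (P a \<inter> P b)) \<le> real n - h"
proof -
  define L where "L = lev_ball v t t \<inter> C"
  have "\<exists>S. S \<subseteq> {..<length v} \<and> subseq (nths v S) c \<and> real (max n (length v)) - real t \<le> real (card S)"
    if "c \<in> L" for c
  proof -
    from that have "c \<in> lev_ball v t t" "length c = n"
      using assms(1) by (auto simp: L_def)
    then obtain S where "S \<subseteq> {..<length v}" "subseq (nths v S) c"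
        "n \<le> card S + t" "length v \<le> card S + t"
      by (metis lev_ball_common_positions)
    then show ?thesis
      by (intro exI[of _ S]) auto
  qed
  then obtain P where P: "\<And>c. c \<in> L \<Longrightarrow> P c \<subseteq> {..<length v}"
      "\<And>c. c \<in> L \<Longrightarrow> subseq (nths v (P c)) c"
      "\<And>c. c \<in> L \<Longrightarrow> real (max n (length v)) - real t \<le> real (card (P c))"
    by metis
  have "real (card (P a \<inter> P b)) \<le> real n - h" if "a \<in> L" "b \<in> L" "a \<noteq> b" for a b
  proof -
    have "2 * card (P a \<inter> P b) + lev_dist a b \<le> n + n"
      using card_common_positions_le[of "P a" v a "P b" b] P that assms(1) by (simp add: L_def)
    moreover have "2 * h \<le> real (lev_dist a b)"
      using assms(2) that by (simp add: L_def)
    ultimately show ?thesis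
      by linarith
  qed
  with P that show thesis
    unfolding L_def by blast
qed

lemma card_lev_ball_inter_code_mult_le:
  fixes C :: "'a list set" and v :: "'a list" and n t :: nat and h :: real
  assumes "finite C" "\<forall>c\<in>C. length c = n"
    and "\<And>a b. a \<in> C \<Longrightarrow> b \<in> C \<Longrightarrow> a \<noteq> b \<Longrightarrow> 2 * h \<le> real (lev_dist a b)"
    and "t < n" "n - t \<le> length v" "length v \<le> n + t" "h \<le> real n"
    and "0 < h * real n - 2 * real t * real n + (real t)\<^sup>2"
  shows "real (card (lev_ball v t t \<inter> C)) * (h * real n - 2 * real t * real n + (real t)\<^sup>2)
    \<le> h * (real n + real t)"
proof -
  obtain P where P: "\<And>c. c \<in> lev_ball v t t \<inter> C \<Longrightarrow> P c \<subseteq> {..<length v}"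
      "\<And>c. c \<in> lev_ball v t t \<inter> C \<Longrightarrow> real (max n (length v)) - real t \<le> real (card (P c))"
    and inter: "\<And>a b. a \<in> lev_ball v t t \<inter> C \<Longrightarrow> b \<in> lev_ball v t t \<inter> C \<Longrightarrow> a \<noteq> b \<Longrightarrow>
      real (card (P a \<inter> P b)) \<le> real n - h"
    using lev_ball_code_position_family[OF assms(2), where v = v and t = t] assms(3) by blast
  define N L where "N = length v" and "L = lev_ball v t t \<inter> C"
  define m where "m = real (max n N) - real t"
  have bounds: "0 \<le> real t" "real t < real n" "h \<le> real n"
      "real n - real t \<le> real N" "real N \<le> real n + real t"
    using assms(4-7) by (auto simp: N_def)
  show ?thesis
  proof (cases "2 * real (card L) * m < real N")
    case True
    then show ?thesis
      using johnson_arith_small_family[OF bounds(1-3) assms(8), where N = "real N"]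
      by (simp add: L_def m_def)
  next
    case False
    have "finite L"
      using assms(1) by (simp add: L_def)
    then have "real (card L) * (m\<^sup>2 - real (card {..<N}) * (real n - h))
        \<le> real (card {..<N}) * (m - (real n - h))"
      by (rule card_family_le_by_intersections[of L "{..<N}" P m "real n - h"])
        (use inter P False in \<open>auto simp: L_def N_def m_def\<close>)
    then show ?thesis
      using johnson_arith_large_family[OF bounds(1-3) assms(8) bounds(4,5)]
      by (simp add: L_def m_def)
  qed
qed

lemma less_radius_imp_denominator_pos:
  fixes n t h :: real
  assumes "h \<le> n" "0 \<le> n" "t < n - sqrt (n * (n - h))"
  shows "0 < h * n - 2 * t * n + t\<^sup>2"
proof -
  have "0 \<le> n * (n - h)"
    using assms(1,2) by simp
  moreover have "sqrt (n * (n - h)) < n - t"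
    using assms(3) by simp
  ultimately have "n * (n - h) < (n - t)\<^sup>2"
    by (metis real_sqrt_ge_zero real_sqrt_pow2 power_strict_mono zero_less_numeral)
  then show ?thesis
    by (simp add: power2_eq_square algebra_simps)
qed

text \<open>Here \<open>k = d / 2\<close>: evenness of \<open>d\<close> makes the denominator an integer, hence at least \<open>1\<close>.\<close>

lemma johnson_bound_le_mult:
  fixes k n t :: nat
  defines "D \<equiv> real k * real n - 2 * real t * real n + (real t)\<^sup>2"
  assumes "t < n" "0 < D"
  shows "real k * (real n + real t) / D \<le> real n * (2 * real k)"
proof -
  define z :: int where "z = int k * int n - 2 * int t * int n + (int t)\<^sup>2"
  have "D = real_of_int z"
    by (simp add: D_def z_def)
  with assms(3) have "1 \<le> z"
    by simp
  with \<open>D = real_of_int z\<close> have "1 \<le> D"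
    by simp
  then have "real k * (real n + real t) / D \<le> real k * (real n + real t)"
    using divide_left_mono[of 1 D "real k * (real n + real t)"] by simp
  also have "\<dots> \<le> real k * (2 * real n)"
    using assms(2) by (intro mult_left_mono) auto
  also have "\<dots> = real n * (2 * real k)"
    by simp
  finally show ?thesis .
qed

theorem mainTheorem3:
  fixes C :: "('a::finite) list set" and n t N d :: nat and v :: "'a list"
  assumes "\<forall>c\<in>C. length c = n"
    and "card C \<ge> 2"
    and "d = min_lev_dist C"
    and "t < n"
    and "n - t \<le> N" and "N \<le> n + t"
    and "length v = N"
    and "real t < real n - sqrt (real n * (real n - real d / 2))"
  shows "real (card (lev_ball v t t \<inter> C))
           \<le> (real d / 2) * (real n + real t) / ((real d / 2 - 2 * real t) * real n + (real t)^2)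
       \<and> (real d / 2) * (real n + real t) / ((real d / 2 - 2 * real t) * real n + (real t)^2)
           \<le> real n * real d"
proof -
  have "finite C"
    using assms(2) by (metis card.infinite not_numeral_le_zero)
  obtain k where k: "d = 2 * k"
    using even_min_lev_dist[OF assms(1,2)] assms(3) by blast
  have "real d / 2 \<le> real n"
    using min_lev_dist_le_double_length[OF assms(1,2)] assms(3) by simp
  define D where "D = real d / 2 * real n - 2 * real t * real n + (real t)\<^sup>2"
  have "0 < D"
    unfolding D_def using \<open>real d / 2 \<le> real n\<close> assms(8) by (intro less_radius_imp_denominator_pos) auto
  have "real (card (lev_ball v t t \<inter> C)) * D \<le> real d / 2 * (real n + real t)"
    unfolding D_def using \<open>finite C\<close> assms(1,4-7) \<open>real d / 2 \<le> real n\<close> \<open>0 < D\<close>[unfolded D_def]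
    by (intro card_lev_ball_inter_code_mult_le) (auto simp: assms(3) min_lev_dist_le)
  moreover have "(real d / 2 - 2 * real t) * real n + (real t)\<^sup>2 = D"
    by (simp add: D_def algebra_simps)
  moreover have "real d / 2 * (real n + real t) / D \<le> real n * real d"
    using johnson_bound_le_mult[of t n k] assms(4) \<open>0 < D\<close> by (simp add: D_def k)
  ultimately show ?thesis
    using \<open>0 < D\<close> by (simp add: pos_le_divide_eq)
qed

end
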